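(* Let $M$ be a connected molecular graph (i.e. a connected simple graph with maximum vertex degree at most $4$) with $n\geq 3$ vertices, and let $G\cong L(M)$ be its line graph. Then $GA(G)>ABC(G)$.
   Context: All graphs are finite, simple and undirected. For a graph $G$ with vertex degrees $d_i$ (degree of vertex $v_i$), the first geometric-arithmetic index is $GA(G)=\sum_{v_iv_j\in E(G)}\frac{2\sqrt{d_id_j}}{d_i+d_j}$ and the atom-bond connectivity index is $ABC(G)=\sum_{v_iv_j\in E(G)}\sqrt{\frac{d_i+d_j-2}{d_id_j}}$. The line graph $L(M)$ has vertex set $E(M)$, two vertices being adjacent iff the corresponding edges of $M$ share an endpoint. *)

theory Defs
  imports Complex_Main
begin

definition simple_graph :: "'a set \<Rightarrow> 'a set set \<Rightarrow> bool" where
  "simple_graph V E \<longleftrightarrow> finite V \<and>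
     (\<forall>e\<in>E. \<exists>u v. u \<in> V \<and> v \<in> V \<and> u \<noteq> v \<and> e = {u, v})"

definition degree :: "'a set set \<Rightarrow> 'a \<Rightarrow> nat" where
  "degree E v = card {e \<in> E. v \<in> e}"

definition adjacent :: "'a set set \<Rightarrow> 'a \<Rightarrow> 'a \<Rightarrow> bool" where
  "adjacent E u v \<longleftrightarrow> {u, v} \<in> E"

definition connected_graph :: "'a set \<Rightarrow> 'a set set \<Rightarrow> bool" where
  "connected_graph V E \<longleftrightarrow> V \<noteq> {} \<and> (\<forall>u\<in>V. \<forall>v\<in>V. (adjacent E)\<^sup>*\<^sup>* u v)"

definition molecular_graph :: "'a set \<Rightarrow> 'a set set \<Rightarrow> bool" where
  "molecular_graph V E \<longleftrightarrow> simple_graph V E \<and> connected_graph V E \<and>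
     (\<forall>v\<in>V. degree E v \<le> 4)"

definition line_graph_vertices :: "'a set set \<Rightarrow> 'a set set" where
  "line_graph_vertices E = E"

definition line_graph_edges :: "'a set set \<Rightarrow> 'a set set set" where
  "line_graph_edges E = {{e, f} | e f. e \<in> E \<and> f \<in> E \<and> e \<noteq> f \<and> e \<inter> f \<noteq> {}}"

text \<open>For an edge e = {v_i, v_j} we have d_i d_j = prod over e of degrees and
  d_i + d_j = sum over e of degrees.\<close>
definition GA_index :: "'a set set \<Rightarrow> real" where
  "GA_index E = (\<Sum>e\<in>E. 2 * sqrt (\<Prod>x\<in>e. real (degree E x)) / (\<Sum>x\<in>e. real (degree E x)))"

definition ABC_index :: "'a set set \<Rightarrow> real" where
  "ABC_index E = (\<Sum>e\<in>E. sqrt (((\<Sum>x\<in>e. real (degree E x)) - 2) / (\<Prod>x\<in>e. real (degree E x))))"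

end

theory Submission
  imports Defs
begin

text \<open>GA(G) - ABC(G) is a sum over the edges of G = L(M) of a term depending only on the two
  end degrees, which lie in 1..6 because M has maximum degree 4. This term is positive except on
  edges pq joining a pendant vertex p of G to a vertex q of degree 4, where it is still at least
  -1/10. There the edge p of M hangs off one endpoint of the edge q, so the three other neighbours
  of q all pass through the other endpoint: they are pairwise adjacent, have degree at least 3,
  and their edges to q contribute at least 3/10 in total. Such a hub q lies on only one bad edge,
  and a good edge is shared by at most two hubs, so the deficit is paid for. Finally G has an
  edge, since M is connected with at least three vertices.\<close>

definition ga_minus_abc :: "nat \<Rightarrow> nat \<Rightarrow> real" where
  "ga_minus_abc a b = 2 * sqrt (real a * real b) / (real a + real b)
     - sqrt ((real a + real b - 2) / (real a * real b))"

definition edge_ga_minus_abc :: "'a set set \<Rightarrow> 'a set \<Rightarrow> real" where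
  "edge_ga_minus_abc G e = 2 * sqrt (\<Prod>x\<in>e. real (degree G x)) / (\<Sum>x\<in>e. real (degree G x))
     - sqrt (((\<Sum>x\<in>e. real (degree G x)) - 2) / (\<Prod>x\<in>e. real (degree G x)))"

lemma GA_index_minus_ABC_index: "GA_index G - ABC_index G = (\<Sum>e\<in>G. edge_ga_minus_abc G e)"
  unfolding GA_index_def ABC_index_def edge_ga_minus_abc_def by (simp add: sum_subtractf)

lemma edge_ga_minus_abc_doubleton:
  "x \<noteq> y \<Longrightarrow> edge_ga_minus_abc G {x, y} = ga_minus_abc (degree G x) (degree G y)"
  unfolding edge_ga_minus_abc_def ga_minus_abc_def by simp

lemma ga_minus_abc_pos:
  fixes a b :: nat
  assumes "1 \<le> a" "1 \<le> b" and "(a + b - 2) * (a + b)^2 < 4 * a^2 * b^2"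
  shows "ga_minus_abc a b > 0"
proof -
  have ab: "real a \<ge> 1" "real b \<ge> 1" using assms by auto
  have "(real a + real b - 2) * (real a + real b)^2 < 4 * (real a)^2 * (real b)^2"
  proof -
    have "real ((a + b - 2) * (a + b)^2) < real (4 * a^2 * b^2)" using assms(3) by linarith
    moreover have "real (a + b - 2) = real a + real b - 2" using assms by auto
    ultimately show ?thesis by simp
  qed
  hence "(real a + real b - 2) / (real a * real b) < 4 * real a * real b / (real a + real b)^2"
    using ab by (simp add: divide_less_eq less_divide_eq power2_eq_square mult_ac)
  hence "sqrt ((real a + real b - 2) / (real a * real b)) < sqrt (4 * real a * real b / (real a + real b)^2)"
    by simp
  also have "\<dots> = 2 * sqrt (real a * real b) / (real a + real b)"
    using ab by (simp add: real_sqrt_divide real_sqrt_mult)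
  finally show ?thesis unfolding ga_minus_abc_def by simp
qed

lemma ga_minus_abc_pos_le_6:
  assumes "1 \<le> a" "a \<le> 6" "1 \<le> b" "b \<le> 6" "\<not> (a = 1 \<and> b \<ge> 4)" "\<not> (b = 1 \<and> a \<ge> 4)"
  shows "ga_minus_abc a b > 0"
proof (rule ga_minus_abc_pos)
  have "a \<in> {1, 2, 3, 4, 5, 6}" "b \<in> {1, 2, 3, 4, 5, 6}" using assms by auto
  hence "(a + b - 2) * ((a + b) * (a + b)) < 4 * (a * a) * (b * b)"
    using assms(5,6) by auto
  thus "(a + b - 2) * (a + b)^2 < 4 * a^2 * b^2" by (simp add: power2_eq_square)
qed (use assms in auto)

lemma ga_minus_abc_1_4: "ga_minus_abc 1 4 \<ge> -1/10"
proof -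
  have "sqrt (3/4) \<le> 9/10" by (rule real_le_lsqrt) (auto simp: power2_eq_square)
  moreover have "sqrt (4::real) = 2" by (simp add: real_sqrt_eq_iff power2_eq_square[symmetric])
  ultimately show ?thesis unfolding ga_minus_abc_def by simp
qed

lemma ga_minus_abc_4_ge:
  assumes "3 \<le> k" "k \<le> 6"
  shows "ga_minus_abc 4 k \<ge> 1/10"
proof -
  have k: "real k \<in> {3, 4, 5, 6}" using assms by auto
  have "sqrt ((4 + real k - 2) / (4 * real k)) \<le> 7/10"
    by (rule real_le_lsqrt) (use k in \<open>auto simp: power2_eq_square\<close>)
  moreover have "2/5 * (4 + real k) \<le> sqrt (4 * real k)"
    by (rule real_le_rsqrt) (use k in \<open>auto simp: power2_eq_square\<close>)
  hence "2 * sqrt (4 * real k) / (4 + real k) \<ge> 4/5" using k by (auto simp: field_simps)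
  ultimately show ?thesis unfolding ga_minus_abc_def by simp
qed

lemma card_le_card_hubs:
  assumes "finite Q"
    and "\<And>e. e \<in> B \<Longrightarrow> \<exists>q\<in>Q. q \<in> e"
    and "\<And>q. q \<in> Q \<Longrightarrow> card {e \<in> B. q \<in> e} \<le> 1"
  shows "card B \<le> card Q"
proof -
  have "B = (\<Union>q\<in>Q. {e \<in> B. q \<in> e})" using assms(2) by blast
  hence "card B \<le> (\<Sum>q\<in>Q. card {e \<in> B. q \<in> e})"
    using card_UN_le[OF assms(1), of "\<lambda>q. {e \<in> B. q \<in> e}"] by simp
  also have "\<dots> \<le> (\<Sum>q\<in>Q. 1)" by (rule sum_mono) (rule assms(3))
  finally show ?thesis by simp
qed

lemma sum_ge_card_hubs_half:
  fixes h :: "'b set \<Rightarrow> real"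
  assumes "finite L" "finite Q"
    and "\<And>e. e \<in> L \<Longrightarrow> card e = 2"
    and "\<And>e. e \<in> L \<Longrightarrow> h e \<ge> 0"
    and "\<And>q. q \<in> Q \<Longrightarrow> (\<Sum>e\<in>{e \<in> L. q \<in> e}. h e) \<ge> C"
  shows "(\<Sum>e\<in>L. h e) \<ge> real (card Q) * (C / 2)"
proof -
  have "real (card Q) * (C / 2) \<le> (\<Sum>q\<in>Q. \<Sum>e\<in>{e \<in> L. q \<in> e}. h e / 2)"
    using assms(5) by (intro sum_bounded_below) (simp add: sum_divide_distrib[symmetric])
  also have "\<dots> = (\<Sum>e\<in>L. \<Sum>q\<in>{q \<in> Q. q \<in> e}. h e / 2)"
    using sum.swap_restrict[of L Q "\<lambda>e q. h e / 2" "\<lambda>e q. q \<in> e"] assms(1,2) by simp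
  also have "\<dots> \<le> (\<Sum>e\<in>L. h e)"
  proof (rule sum_mono)
    fix e assume e: "e \<in> L"
    have "card {q \<in> Q. q \<in> e} \<le> card e"
      using assms(3)[OF e] by (intro card_mono) (auto intro: card_ge_0_finite)
    hence "real (card {q \<in> Q. q \<in> e}) * (h e / 2) \<le> 2 * (h e / 2)"
      using assms(3,4)[OF e] by (intro mult_right_mono) auto
    thus "(\<Sum>q\<in>{q \<in> Q. q \<in> e}. h e / 2) \<le> h e" by simp
  qed
  finally show ?thesis .
qed

text \<open>Discharging: the deficit, at most c, of each bad edge is charged to a hub on it; every
  hub receives at least C/2 from the good edges, as each good edge lies on at most two hubs.\<close>
lemma sum_pos_by_discharging:
  fixes h :: "'b set \<Rightarrow> real"
  assumes "finite L" "L \<noteq> {}" "finite Q" "B \<subseteq> L"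
    and "\<And>e. e \<in> L \<Longrightarrow> card e = 2"
    and good: "\<And>e. e \<in> L - B \<Longrightarrow> h e > 0"
    and bad: "\<And>e. e \<in> B \<Longrightarrow> h e \<ge> - c"
    and bad_hub: "\<And>e. e \<in> B \<Longrightarrow> \<exists>q\<in>Q. q \<in> e"
    and "\<And>q. q \<in> Q \<Longrightarrow> card {e \<in> B. q \<in> e} \<le> 1"
    and hub: "\<And>q. q \<in> Q \<Longrightarrow> (\<Sum>e\<in>{e \<in> L - B. q \<in> e}. h e) \<ge> C"
    and "0 \<le> c" "2 * c < C"
  shows "(\<Sum>e\<in>L. h e) > 0"
proof (cases "Q = {}")
  case True
  hence "B = {}" using bad_hub by blast
  thus ?thesis using assms(1,2) good by (intro sum_pos) auto
next
  case False
  have "card B \<le> card Q" by (rule card_le_card_hubs) (use assms in auto)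
  hence "- c * real (card Q) \<le> - c * real (card B)"
    using \<open>0 \<le> c\<close> by (simp add: mult_left_mono)
  also have "\<dots> \<le> (\<Sum>e\<in>B. h e)"
    using sum_bounded_below[of B "- c" h] bad by (simp add: mult.commute)
  finally have "(\<Sum>e\<in>B. h e) \<ge> - c * real (card Q)" .
  moreover have "(\<Sum>e\<in>L - B. h e) \<ge> real (card Q) * (C / 2)"
    by (rule sum_ge_card_hubs_half) (use assms(1,3,5) good hub in \<open>auto simp: less_imp_le\<close>)
  moreover have "(\<Sum>e\<in>L. h e) = (\<Sum>e\<in>L - B. h e) + (\<Sum>e\<in>B. h e)"
    using sum.subset_diff[OF assms(4,1)] .
  ultimately have "(\<Sum>e\<in>L. h e) \<ge> real (card Q) * (C / 2 - c)"
    by (simp add: algebra_simps)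
  moreover have "real (card Q) * (C / 2 - c) > 0"
    using False assms(3) \<open>2 * c < C\<close> by (simp add: card_gt_0_iff)
  ultimately show ?thesis by linarith
qed

definition line_neighbours :: "'a set set \<Rightarrow> 'a set \<Rightarrow> 'a set set" where
  "line_neighbours E x = {y \<in> E. y \<noteq> x \<and> x \<inter> y \<noteq> {}}"

lemma doubleton_in_line_graph_edges_iff:
  "x \<noteq> y \<Longrightarrow> {x, y} \<in> line_graph_edges E \<longleftrightarrow> x \<in> E \<and> y \<in> line_neighbours E x"
  unfolding line_graph_edges_def line_neighbours_def by (auto simp: doubleton_eq_iff)

lemma line_graph_edgesE:
  assumes "e \<in> line_graph_edges E"
  obtains x y where "e = {x, y}" "x \<in> E" "y \<in> line_neighbours E x"
  using assms unfolding line_graph_edges_def line_neighbours_def by blast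

lemma line_neighbours_sym: "x \<in> E \<Longrightarrow> y \<in> line_neighbours E x \<Longrightarrow> x \<in> line_neighbours E y"
  unfolding line_neighbours_def by auto

lemma finite_line_graph_edges: "finite E \<Longrightarrow> finite (line_graph_edges E)"
  by (rule finite_subset[of _ "Pow E"]) (auto simp: line_graph_edges_def)

lemma card_line_graph_edge: "e \<in> line_graph_edges E \<Longrightarrow> card e = 2"
  by (erule line_graph_edgesE) (auto simp: line_neighbours_def card_insert_if)

lemma degree_line_graph_edges:
  assumes "x \<in> E"
  shows "degree (line_graph_edges E) x = card (line_neighbours E x)"
proof -
  have "{e \<in> line_graph_edges E. x \<in> e} = (\<lambda>y. {x, y}) ` line_neighbours E x"
  proof (intro equalityI subsetI)
    fix e assume "e \<in> {e \<in> line_graph_edges E. x \<in> e}"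
    then obtain u v where e: "e = {u, v}" "u \<in> E" "v \<in> line_neighbours E u" "x \<in> e"
      by (auto elim: line_graph_edgesE)
    show "e \<in> (\<lambda>y. {x, y}) ` line_neighbours E x"
    proof (cases "x = u")
      case True thus ?thesis using e by blast
    next
      case False
      hence "x = v" "u \<in> line_neighbours E x" using e line_neighbours_sym by auto
      thus ?thesis using e by (auto simp: insert_commute)
    qed
  next
    fix e assume "e \<in> (\<lambda>y. {x, y}) ` line_neighbours E x"
    then obtain y where "y \<in> line_neighbours E x" "e = {x, y}" by blast
    thus "e \<in> {e \<in> line_graph_edges E. x \<in> e}"
      using assms doubleton_in_line_graph_edges_iff[of x y E] by (auto simp: line_neighbours_def)
  qed
  moreover have "inj_on (\<lambda>y. {x, y}) (line_neighbours E x)"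
    by (rule inj_onI) (auto simp: line_neighbours_def doubleton_eq_iff)
  ultimately show ?thesis unfolding degree_def by (simp add: card_image)
qed

locale bounded_degree_graph =
  fixes E :: "'a set set" and \<Delta> :: nat
  assumes finite_edges: "finite E"
    and edge_doubleton: "\<And>e. e \<in> E \<Longrightarrow> \<exists>a b. a \<noteq> b \<and> e = {a, b}"
    and degree_le: "\<And>e v. e \<in> E \<Longrightarrow> v \<in> e \<Longrightarrow> degree E v \<le> \<Delta>"
begin

lemma card_other_edges_at_less:
  assumes "x \<in> E" "v \<in> x"
  shows "card ({f \<in> E. v \<in> f} - {x}) < \<Delta>"
proof -
  have "card ({f \<in> E. v \<in> f} - {x}) < card {f \<in> E. v \<in> f}"
    using assms finite_edges by (intro psubset_card_mono) auto
  thus ?thesis using degree_le[OF assms] by (simp add: degree_def)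
qed

lemma finite_line_neighbours: "finite (line_neighbours E x)"
  using finite_edges by (simp add: line_neighbours_def)

lemma card_line_neighbours_le:
  assumes "x \<in> E"
  shows "card (line_neighbours E x) \<le> 2 * (\<Delta> - 1)"
proof -
  obtain a b where ab: "x = {a, b}" using edge_doubleton[OF assms] by blast
  have "line_neighbours E x \<subseteq> ({f \<in> E. a \<in> f} - {x}) \<union> ({f \<in> E. b \<in> f} - {x})"
    using ab by (auto simp: line_neighbours_def)
  hence "card (line_neighbours E x) \<le> card (({f \<in> E. a \<in> f} - {x}) \<union> ({f \<in> E. b \<in> f} - {x}))"
    using finite_edges by (intro card_mono) auto
  also have "\<dots> \<le> card ({f \<in> E. a \<in> f} - {x}) + card ({f \<in> E. b \<in> f} - {x})"
    by (rule card_Un_le)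
  also have "\<dots> \<le> 2 * (\<Delta> - 1)"
    using card_other_edges_at_less[OF assms, of a] card_other_edges_at_less[OF assms, of b] ab by simp
  finally show ?thesis .
qed

text \<open>p meets q at one endpoint of q and meets no other edge, so every other edge meeting q
  passes through the other endpoint w.\<close>
lemma common_vertex_near_pendant:
  assumes "p \<in> E" "line_neighbours E p = {q}"
  obtains w where "w \<in> q" "\<And>r. r \<in> line_neighbours E q - {p} \<Longrightarrow> w \<in> r"
proof -
  have q: "q \<in> E" "q \<noteq> p" "p \<inter> q \<noteq> {}" using assms(2) by (auto simp: line_neighbours_def)
  obtain v w where vw: "q = {v, w}" "v \<in> p"
  proof -
    obtain a b where ab: "q = {a, b}" using edge_doubleton[OF q(1)] by blast
    show ?thesis
    proof (cases "a \<in> p")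
      case True thus ?thesis using that ab by blast
    next
      case False
      hence "b \<in> p" using q(3) ab by auto
      thus ?thesis using that[of b a] ab by (simp add: insert_commute)
    qed
  qed
  have "w \<in> r" if r: "r \<in> line_neighbours E q - {p}" for r
  proof -
    have "r \<notin> line_neighbours E p" using assms(2) r by (auto simp: line_neighbours_def)
    hence "r \<inter> p = {}" using r by (auto simp: line_neighbours_def)
    thus ?thesis using r vw by (auto simp: line_neighbours_def)
  qed
  thus ?thesis using that vw by blast
qed

lemma card_line_neighbours_at_pendant:
  assumes "p \<in> E" "line_neighbours E p = {q}"
  shows "card (line_neighbours E q) \<le> \<Delta>"
proof -
  obtain w where w: "w \<in> q" "\<And>r. r \<in> line_neighbours E q - {p} \<Longrightarrow> w \<in> r"
    using common_vertex_near_pendant[OF assms] by blast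
  have q: "q \<in> E" using assms(2) by (auto simp: line_neighbours_def)
  have "line_neighbours E q \<subseteq> insert p ({f \<in> E. w \<in> f} - {q})"
    using w(2) by (auto simp: line_neighbours_def)
  hence "card (line_neighbours E q) \<le> card (insert p ({f \<in> E. w \<in> f} - {q}))"
    using finite_edges by (intro card_mono) auto
  also have "\<dots> \<le> Suc (card ({f \<in> E. w \<in> f} - {q}))"
    using finite_edges by (simp add: card_insert_if)
  also have "\<dots> \<le> \<Delta>" using card_other_edges_at_less[OF q w(1)] by simp
  finally show ?thesis .
qed

lemma card_line_neighbours_near_pendant:
  assumes "p \<in> E" "line_neighbours E p = {q}"
    and "card (line_neighbours E q) = \<Delta>" "r \<in> line_neighbours E q - {p}"
  shows "card (line_neighbours E r) \<ge> \<Delta> - 1"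
proof -
  obtain w where w: "w \<in> q" "\<And>r. r \<in> line_neighbours E q - {p} \<Longrightarrow> w \<in> r"
    using common_vertex_near_pendant[OF assms(1,2)] by blast
  have q: "q \<in> E" using assms(2) by (auto simp: line_neighbours_def)
  define S where "S = line_neighbours E q - {p, r}"
  have "card {p, r} \<le> 2" by (simp add: card_insert_if)
  hence "\<Delta> - 2 \<le> card S"
    using diff_card_le_card_Diff[of "{p, r}" "line_neighbours E q"] by (simp add: S_def assms(3))
  moreover have "q \<notin> S" by (simp add: S_def line_neighbours_def)
  moreover have "insert q S \<subseteq> line_neighbours E r"
    using assms(4) w q by (auto simp: S_def line_neighbours_def)
  hence "card (insert q S) \<le> card (line_neighbours E r)"
    by (intro card_mono finite_line_neighbours)
  ultimately show ?thesis
    using finite_subset[OF _ finite_line_neighbours, of S q] by (simp add: S_def)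
qed

end

locale molecular_edge_set = bounded_degree_graph E 4 for E :: "'a set set"
begin

abbreviation line_degree :: "'a set \<Rightarrow> nat" where
  "line_degree \<equiv> degree (line_graph_edges E)"

lemma line_degree_le_6: "x \<in> E \<Longrightarrow> line_degree x \<le> 6"
  using card_line_neighbours_le by (simp add: degree_line_graph_edges)

lemma one_le_line_degree: "x \<in> E \<Longrightarrow> y \<in> line_neighbours E x \<Longrightarrow> 1 \<le> line_degree x"
  using finite_line_neighbours by (auto simp: degree_line_graph_edges Suc_le_eq card_gt_0_iff)

lemma line_neighbours_of_pendant:
  assumes "p \<in> E" "line_degree p = 1" "q \<in> line_neighbours E p"
  shows "line_neighbours E p = {q}"
  using assms by (metis card_1_singletonE degree_line_graph_edges singletonD)

lemma line_degree_at_pendant: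
  assumes "p \<in> E" "line_degree p = 1" "q \<in> line_neighbours E p"
  shows "line_degree q \<le> 4"
  using card_line_neighbours_at_pendant[OF assms(1) line_neighbours_of_pendant[OF assms]] assms(3)
  by (simp add: degree_line_graph_edges line_neighbours_def)

lemma line_degree_near_pendant:
  assumes "p \<in> E" "line_degree p = 1" "q \<in> line_neighbours E p"
    and "line_degree q = 4" "r \<in> line_neighbours E q - {p}"
  shows "line_degree r \<ge> 3"
proof -
  have "q \<in> E" "r \<in> E" using assms(3,5) by (auto simp: line_neighbours_def)
  thus ?thesis
    using card_line_neighbours_near_pendant[OF assms(1) line_neighbours_of_pendant[OF assms(1-3)]]
      assms(4,5) by (simp add: degree_line_graph_edges)
qed

text \<open>The only edges of the line graph on which GA loses against ABC join a pendant vertex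
  to a vertex of degree 4, its hub.\<close>
definition pendant_hub_edges :: "'a set set set" where
  "pendant_hub_edges = {e \<in> line_graph_edges E.
     \<exists>x y. e = {x, y} \<and> line_degree x = 1 \<and> line_degree y = 4}"

definition pendant_hubs :: "'a set set" where
  "pendant_hubs = {q \<in> E. line_degree q = 4 \<and> (\<exists>p\<in>line_neighbours E q. line_degree p = 1)}"

lemma edge_ga_minus_abc_pos:
  assumes "e \<in> line_graph_edges E - pendant_hub_edges"
  shows "edge_ga_minus_abc (line_graph_edges E) e > 0"
proof -
  obtain x y where e: "e = {x, y}" "x \<in> E" "y \<in> line_neighbours E x"
    using assms by (auto elim: line_graph_edgesE)
  have y: "y \<in> E" "x \<in> line_neighbours E y" "x \<noteq> y"
    using e line_neighbours_sym by (auto simp: line_neighbours_def)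
  have not_bad: "\<not> (line_degree u = 1 \<and> line_degree v \<ge> 4)"
    if "u \<in> E" "v \<in> line_neighbours E u" "e = {u, v}" for u v
  proof
    assume uv: "line_degree u = 1 \<and> line_degree v \<ge> 4"
    hence "line_degree v = 4" using line_degree_at_pendant that by fastforce
    hence "e \<in> pendant_hub_edges" using assms uv that by (auto simp: pendant_hub_edges_def)
    thus False using assms by simp
  qed
  have "ga_minus_abc (line_degree x) (line_degree y) > 0"
    using e y not_bad[of x y] not_bad[of y x] one_le_line_degree line_degree_le_6
    by (intro ga_minus_abc_pos_le_6) (auto simp: insert_commute)
  thus ?thesis using e(1) y(3) by (simp add: edge_ga_minus_abc_doubleton)
qed

lemma edge_ga_minus_abc_pendant_hub_edge:
  assumes "e \<in> pendant_hub_edges"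
  shows "edge_ga_minus_abc (line_graph_edges E) e \<ge> - (1/10)"
proof -
  obtain x y where "e = {x, y}" "line_degree x = 1" "line_degree y = 4"
    using assms by (auto simp: pendant_hub_edges_def)
  moreover from this have "x \<noteq> y" by auto
  ultimately show ?thesis using ga_minus_abc_1_4 by (simp add: edge_ga_minus_abc_doubleton)
qed

lemma pendant_hub_edge_contains_hub:
  assumes "e \<in> pendant_hub_edges"
  shows "\<exists>q\<in>pendant_hubs. q \<in> e"
proof -
  obtain p q where pq: "e = {p, q}" "line_degree p = 1" "line_degree q = 4"
    using assms by (auto simp: pendant_hub_edges_def)
  moreover obtain x y where "e = {x, y}" "x \<in> E" "y \<in> line_neighbours E x"
    using assms by (auto simp: pendant_hub_edges_def elim: line_graph_edgesE)
  ultimately have "q \<in> E" "p \<in> line_neighbours E q"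
    using line_neighbours_sym by (auto simp: doubleton_eq_iff line_neighbours_def)
  thus ?thesis using pq by (auto simp: pendant_hubs_def)
qed

lemma pendant_hubE:
  assumes "q \<in> pendant_hubs"
  obtains p where "p \<in> line_neighbours E q" "p \<in> E" "line_degree p = 1" "q \<in> line_neighbours E p"
    "\<forall>r\<in>line_neighbours E q - {p}. line_degree r \<ge> 3"
proof -
  obtain p where p: "p \<in> line_neighbours E q" "line_degree p = 1" "q \<in> E" "line_degree q = 4"
    using assms by (auto simp: pendant_hubs_def)
  have pE: "p \<in> E" and qp: "q \<in> line_neighbours E p"
    using p line_neighbours_sym by (auto simp: line_neighbours_def)
  show ?thesis
    using that[OF p(1) pE p(2) qp] line_degree_near_pendant[OF pE p(2) qp p(4)] by blast
qed

lemma card_pendant_hub_edges_at_hub: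
  assumes "q \<in> pendant_hubs"
  shows "card {e \<in> pendant_hub_edges. q \<in> e} \<le> 1"
proof -
  obtain p where p: "p \<in> line_neighbours E q" "p \<in> E" "line_degree p = 1" "q \<in> line_neighbours E p"
    "\<forall>r\<in>line_neighbours E q - {p}. line_degree r \<ge> 3"
    by (rule pendant_hubE[OF assms])
  have q: "q \<in> E" "line_degree q = 4" using assms by (auto simp: pendant_hubs_def)
  have "{e \<in> pendant_hub_edges. q \<in> e} \<subseteq> {{p, q}}"
  proof
    fix e assume e: "e \<in> {e \<in> pendant_hub_edges. q \<in> e}"
    hence eB: "e \<in> pendant_hub_edges" and "q \<in> e" by simp_all
    then obtain x y where xy: "e = {x, y}" "line_degree x = 1" "line_degree y = 4"
      unfolding pendant_hub_edges_def by blast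
    have "e \<in> line_graph_edges E" using eB unfolding pendant_hub_edges_def by blast
    then obtain u v where uv: "e = {u, v}" "u \<in> E" "v \<in> line_neighbours E u"
      by (rule line_graph_edgesE)
    have "y = q" "x \<noteq> q" using \<open>q \<in> e\<close> xy q(2) by auto
    have "u = x \<and> v = q \<or> u = q \<and> v = x" using uv(1) xy(1) \<open>y = q\<close> by (auto simp: doubleton_eq_iff)
    hence "x \<in> line_neighbours E q"
      using uv(2,3) line_neighbours_sym[of x E q] by blast
    have "x = p"
    proof (rule ccontr)
      assume "x \<noteq> p"
      hence "line_degree x \<ge> 3" using p(5) \<open>x \<in> line_neighbours E q\<close> by blast
      thus False using xy(2) by simp
    qed
    thus "e \<in> {{p, q}}" using xy(1) \<open>y = q\<close> by simp
  qed
  hence "card {e \<in> pendant_hub_edges. q \<in> e} \<le> card {{p, q}}" by (intro card_mono) simp_all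
  thus ?thesis by simp
qed

lemma sum_edge_ga_minus_abc_at_hub:
  assumes "q \<in> pendant_hubs"
  shows "(\<Sum>e\<in>{e \<in> line_graph_edges E - pendant_hub_edges. q \<in> e}.
           edge_ga_minus_abc (line_graph_edges E) e) \<ge> 3/10"
proof -
  let ?L = "line_graph_edges E" and ?h = "edge_ga_minus_abc (line_graph_edges E)"
  obtain p where p: "p \<in> line_neighbours E q" "p \<in> E" "line_degree p = 1" "q \<in> line_neighbours E p"
    "\<forall>r\<in>line_neighbours E q - {p}. line_degree r \<ge> 3"
    by (rule pendant_hubE[OF assms])
  have q: "q \<in> E" "line_degree q = 4" using assms by (auto simp: pendant_hubs_def)
  define T where "T = (\<lambda>r. {q, r}) ` (line_neighbours E q - {p})"
  have "card T = 3"
  proof -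
    have "inj_on (\<lambda>r. {q, r}) (line_neighbours E q - {p})"
      by (rule inj_onI) (auto simp: line_neighbours_def doubleton_eq_iff)
    moreover have "card (line_neighbours E q - {p}) = 3"
      using p(1) q finite_line_neighbours by (simp add: degree_line_graph_edges)
    ultimately show ?thesis by (simp add: T_def card_image)
  qed
  have T: "e \<in> ?L - pendant_hub_edges \<and> q \<in> e \<and> ?h e \<ge> 1/10" if eT: "e \<in> T" for e
  proof -
    obtain r where "e = {q, r}" "r \<in> line_neighbours E q - {p}"
      using eT unfolding T_def by blast
    hence r: "e = {q, r}" "r \<in> line_neighbours E q" "r \<noteq> p" by simp_all
    have "r \<in> E" "q \<noteq> r" using r(2) by (auto simp: line_neighbours_def)
    have dr: "3 \<le> line_degree r" "line_degree r \<le> 6"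
      using p(5) r line_degree_le_6[OF \<open>r \<in> E\<close>] by auto
    have "e \<in> ?L" using r q \<open>q \<noteq> r\<close> by (simp add: doubleton_in_line_graph_edges_iff)
    moreover have "e \<notin> pendant_hub_edges"
      using r(1) q(2) dr by (auto simp: pendant_hub_edges_def doubleton_eq_iff)
    moreover have "?h e \<ge> 1/10"
      using r(1) \<open>q \<noteq> r\<close> q(2) ga_minus_abc_4_ge[OF dr] by (simp add: edge_ga_minus_abc_doubleton)
    ultimately show ?thesis using r(1) by simp
  qed
  have "3/10 \<le> (\<Sum>e\<in>T. ?h e)"
    using sum_bounded_below[of T "1/10" ?h] T \<open>card T = 3\<close> by simp
  also have "\<dots> \<le> (\<Sum>e\<in>{e \<in> ?L - pendant_hub_edges. q \<in> e}. ?h e)"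
  proof (rule sum_mono2)
    show "finite {e \<in> ?L - pendant_hub_edges. q \<in> e}"
      using finite_line_graph_edges[OF finite_edges] by simp
    show "T \<subseteq> {e \<in> ?L - pendant_hub_edges. q \<in> e}" using T by blast
    show "0 \<le> ?h e" if "e \<in> {e \<in> ?L - pendant_hub_edges. q \<in> e} - T" for e
      using that by (intro less_imp_le edge_ga_minus_abc_pos) simp
  qed
  finally show ?thesis .
qed

end

lemma molecular_edge_set_of_molecular_graph:
  assumes "molecular_graph V E"
  shows "molecular_edge_set E"
proof
  have V: "finite V" and E: "\<And>e. e \<in> E \<Longrightarrow> \<exists>u v. u \<in> V \<and> v \<in> V \<and> u \<noteq> v \<and> e = {u, v}"
    using assms by (auto simp: molecular_graph_def simple_graph_def)
  hence "E \<subseteq> Pow V" by blast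
  thus "finite E" by (rule finite_subset) (simp add: V)
  show "\<exists>a b. a \<noteq> b \<and> e = {a, b}" if "e \<in> E" for e using E[OF that] by blast
  show "degree E v \<le> 4" if "e \<in> E" "v \<in> e" for e v
    using assms E[OF that(1)] that(2) by (auto simp: molecular_graph_def)
qed

lemma line_graph_edges_nonempty:
  assumes conn: "connected_graph V E" and c3: "card V \<ge> 3"
  shows "line_graph_edges E \<noteq> {}"
proof
  assume L0: "line_graph_edges E = {}"
  have disj: "e = f" if "e \<in> E" "f \<in> E" "e \<inter> f \<noteq> {}" for e f
  proof (rule ccontr)
    assume "e \<noteq> f"
    hence "{e, f} \<in> line_graph_edges E"
      using that by (simp add: doubleton_in_line_graph_edges_iff line_neighbours_def)
    thus False using L0 by simp
  qed
  have "V \<noteq> {}" using c3 by auto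
  then obtain a where a: "a \<in> V" by blast
  have "\<not> V \<subseteq> {a}" using c3 card_mono[OF _ , of "{a}" V] by auto
  then obtain b where b: "b \<in> V" "b \<noteq> a" by blast
  have "(adjacent E)\<^sup>*\<^sup>* a b" using conn a b by (simp add: connected_graph_def)
  then obtain c where ac: "adjacent E a c"
    using b(2) by (metis converse_rtranclpE)
  hence acE: "{a, c} \<in> E" by (simp add: adjacent_def)
  have "\<not> V \<subseteq> {a, c}"
  proof
    assume "V \<subseteq> {a, c}"
    hence "card V \<le> card {a, c}" by (intro card_mono) auto
    also have "\<dots> \<le> 2" by (rule card_insert_le_m1) auto
    finally show False using c3 by simp
  qed
  then obtain d where d: "d \<in> V" "d \<notin> {a, c}" by blast
  have ad: "(adjacent E)\<^sup>*\<^sup>* a d" using conn a d by (simp add: connected_graph_def)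
  have "z \<in> {a, c}" if "(adjacent E)\<^sup>*\<^sup>* a z" for z
    using that
  proof (induction rule: rtranclp_induct)
    case base thus ?case by simp
  next
    case (step y z)
    hence yz: "{y, z} \<in> E" by (simp add: adjacent_def)
    have "{y, z} \<inter> {a, c} \<noteq> {}" using step by auto
    hence "{y, z} = {a, c}" using disj[OF yz acE] by simp
    thus ?case by auto
  qed
  thus False using ad d by blast
qed

theorem theorem3p2:
  fixes V :: "'a set" and E :: "'a set set"
  assumes "molecular_graph V E"
    and "card V \<ge> 3"
  shows "GA_index (line_graph_edges E) > ABC_index (line_graph_edges E)"
proof -
  interpret molecular_edge_set E by (rule molecular_edge_set_of_molecular_graph[OF assms(1)])
  have "(\<Sum>e\<in>line_graph_edges E. edge_ga_minus_abc (line_graph_edges E) e) > 0"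
  proof (rule sum_pos_by_discharging[where B = pendant_hub_edges and c = "1/10" and C = "3/10"])
    show "finite (line_graph_edges E)" by (rule finite_line_graph_edges[OF finite_edges])
    show "line_graph_edges E \<noteq> {}"
      using assms by (intro line_graph_edges_nonempty) (auto simp: molecular_graph_def)
    show "finite pendant_hubs" using finite_edges by (simp add: pendant_hubs_def)
    show "pendant_hub_edges \<subseteq> line_graph_edges E" by (auto simp: pendant_hub_edges_def)
  qed (fact card_line_graph_edge edge_ga_minus_abc_pos edge_ga_minus_abc_pendant_hub_edge
      pendant_hub_edge_contains_hub card_pendant_hub_edges_at_hub sum_edge_ga_minus_abc_at_hub | simp)+
  thus ?thesis using GA_index_minus_ABC_index[of "line_graph_edges E"] by simp
qed

end
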